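(* Let $(T,E)$ be the $3$-regular tree, $x\in T$ and $y$ a neighbor of $x$. Define functions $u_t:\mathbb Z\to\mathbb Z$ for $t\ge 0$ recursively: $u_0[0]=u_0[-1]=1$ and $u_0[s]=0$ for all other $s$; given $u_t$, first define $u_{t+1}[s]$ for odd $s$ by $$u_{t+1}[s]=\begin{cases}2u_t[s-1]-u_t[s]+u_t[s+1] & s<0,\\ u_t[s-1]-u_t[s]+2u_t[s+1] & s>0,\end{cases}$$ and then for even $s$ by $$u_{t+1}[s]=\begin{cases}2u_{t+1}[s-1]-u_t[s]+u_{t+1}[s+1] & s<0,\\ u_{t+1}[s-1]-u_t[s]+2u_{t+1}[s+1] & s\ge 0.\end{cases}$$ Then for every $t\ge 0$: for $s\ge 0$, $u_t[s]=r_{2t}(x,y)_z$ for every $z\in T_s(x,y)$, and for $s\le -1$, $u_t[s]=r_{2t}(x,y)_z$ for every $z\in T'_{-s}(x,y)$; moreover $$f_{4t-1}=\sum_{s\ge 1,\ s\text{ odd}}2^s u_t[s]+\sum_{s\ge 1,\ s \text{ odd}}2^{s-1}u_t[-s],\qquad f_{4t+1}=\sum_{s\ge 0,\ s\text{ even}}2^s u_t[s]+\sum_{s\ge 2,\ s\text{ even}}2^{s-1}u_t[-s].$$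
   Context: $(f_i)_{i\in\mathbb Z}$ are the Fibonacci numbers with $f_0=0$, $f_1=1$, $f_{i+1}=f_i+f_{i-1}$ for all $i\in\mathbb Z$. $(T,E)$ is the $3$-regular tree with graph distance $d$. $K_0(T)$ is the free abelian group with basis $\{s(z):z\in T\}$, elements written $a=\sum_z a_z s(z)$. For $v\in T$ the reflection $\sigma^v$ on $K_0(T)$ is $(\sigma^v a)_z=a_z$ for $z\ne v$, $(\sigma^v a)_v=-a_v+\sum_{\{w,v\}\in E}a_w$. $\Sigma^x$ is the composition of all $\sigma^v$ with $d(x,v)$ even and $\underline\Sigma^x$ the composition of all $\sigma^v$ with $d(x,v)$ odd. For neighbors $x,y$: $r_0(x,y)=s(x)+s(y)$, and $r_{t+1}(x,y)=\underline\Sigma^x r_t(x,y)$ for $t$ even, $r_{t+1}(x,y)=\Sigma^x r_t(x,y)$ for $t$ odd. $T_s(x,y)$ is the set of vertices $z$ with $d(x,z)=s$ such that the path from $x$ to $z$ does not pass through $y$; $T'_s(x,y)$ is the set of vertices $z$ with $d(x,z)=s$ whose path from $x$ passes through $y$. *)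

theory Defs
  imports Main "HOL-Library.Groups_Big_Fun"
begin

function fibz :: "int \<Rightarrow> int" where
  "fibz n = (if n = 0 then 0 else if n = 1 then 1
             else if n > 1 then fibz (n - 1) + fibz (n - 2)
             else fibz (n + 2) - fibz (n + 1))"
  by auto
termination
  by (relation "measure (\<lambda>n. if n \<ge> 0 then nat (2 * n) else nat (1 - 2 * n))") auto

text \<open>Vertices: reduced words over the alphabet {0,1,2} (no two consecutive equal letters),
  i.e. the Cayley graph of the free product of three copies of Z/2, which is the 3-regular tree.\<close>

definition reduced_word :: "nat list \<Rightarrow> bool" where
  "reduced_word w \<longleftrightarrow> (\<forall>a\<in>set w. a < 3) \<and> (\<forall>i. Suc i < length w \<longrightarrow> w ! i \<noteq> w ! Suc i)"

typedef tree3 = "{w. reduced_word w}"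
  by (rule exI[of _ "[]"]) (simp add: reduced_word_def)

definition adj :: "tree3 \<Rightarrow> tree3 \<Rightarrow> bool" where
  "adj u v \<longleftrightarrow> (\<exists>a. Rep_tree3 v = a # Rep_tree3 u) \<or> (\<exists>a. Rep_tree3 u = a # Rep_tree3 v)"

definition walk :: "tree3 list \<Rightarrow> bool" where
  "walk p \<longleftrightarrow> p \<noteq> [] \<and> (\<forall>i. Suc i < length p \<longrightarrow> adj (p ! i) (p ! Suc i))"

definition dist :: "tree3 \<Rightarrow> tree3 \<Rightarrow> nat" where
  "dist x z = (LEAST n. \<exists>p. walk p \<and> hd p = x \<and> last p = z \<and> length p = Suc n)"

definition geodesic :: "tree3 list \<Rightarrow> tree3 \<Rightarrow> tree3 \<Rightarrow> bool" where
  "geodesic p x z \<longleftrightarrow> walk p \<and> hd p = x \<and> last p = z \<and> length p = Suc (dist x z)"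

definition Ts :: "tree3 \<Rightarrow> tree3 \<Rightarrow> nat \<Rightarrow> tree3 set" where
  "Ts x y s = {z. dist x z = s \<and> \<not> (\<exists>p. geodesic p x z \<and> y \<in> set p)}"

definition Ts' :: "tree3 \<Rightarrow> tree3 \<Rightarrow> nat \<Rightarrow> tree3 set" where
  "Ts' x y s = {z. dist x z = s \<and> (\<exists>p. geodesic p x z \<and> y \<in> set p)}"

text \<open>Elements of K_0(T) are represented by their coefficient functions tree3 => int
  (finitely supported ones form K_0(T)).\<close>

definition sgen :: "tree3 \<Rightarrow> tree3 \<Rightarrow> int" where
  "sgen v = (\<lambda>z. if z = v then 1 else 0)"

definition refl :: "tree3 \<Rightarrow> (tree3 \<Rightarrow> int) \<Rightarrow> (tree3 \<Rightarrow> int)" where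
  "refl v a = (\<lambda>z. if z = v then - a v + (\<Sum>w\<in>{w. adj w v}. a w) else a z)"

text \<open>Composition of all reflections at vertices of even (resp. odd) distance from x.
  These reflections pairwise commute (the vertices are pairwise non-adjacent), so the
  composition acts coordinatewise as the corresponding single reflection.\<close>

definition Sigma_even :: "tree3 \<Rightarrow> (tree3 \<Rightarrow> int) \<Rightarrow> (tree3 \<Rightarrow> int)" where
  "Sigma_even x a = (\<lambda>z. if even (dist x z) then refl z a z else a z)"

definition Sigma_odd :: "tree3 \<Rightarrow> (tree3 \<Rightarrow> int) \<Rightarrow> (tree3 \<Rightarrow> int)" where
  "Sigma_odd x a = (\<lambda>z. if odd (dist x z) then refl z a z else a z)"

primrec rr :: "tree3 \<Rightarrow> tree3 \<Rightarrow> nat \<Rightarrow> (tree3 \<Rightarrow> int)" where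
  "rr x y 0 = (\<lambda>z. sgen x z + sgen y z)"
| "rr x y (Suc t) = (if even t then Sigma_odd x (rr x y t) else Sigma_even x (rr x y t))"

definition u_odd :: "(int \<Rightarrow> int) \<Rightarrow> int \<Rightarrow> int" where
  "u_odd u s = (if s < 0 then 2 * u (s - 1) - u s + u (s + 1)
                else u (s - 1) - u s + 2 * u (s + 1))"

definition u_step :: "(int \<Rightarrow> int) \<Rightarrow> int \<Rightarrow> int" where
  "u_step u s = (if odd s then u_odd u s
                 else if s < 0 then 2 * u_odd u (s - 1) - u s + u_odd u (s + 1)
                 else u_odd u (s - 1) - u s + 2 * u_odd u (s + 1))"

primrec useq :: "nat \<Rightarrow> int \<Rightarrow> int" where
  "useq 0 = (\<lambda>s. if s = 0 \<or> s = -1 then 1 else 0)"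
| "useq (Suc t) = u_step (useq t)"

end

theory Submission
  imports Defs "HOL-Library.Sublist"
begin

text \<open>Label each vertex \<open>z\<close> by its signed level: \<open>d(x,z)\<close> if the geodesic from \<open>x\<close> avoids \<open>y\<close>,
  and \<open>-d(x,z)\<close> otherwise. A vertex on level \<open>s \<ge> 0\<close> has one neighbour on level \<open>s - 1\<close> and two
  on level \<open>s + 1\<close>, and symmetrically for \<open>s < 0\<close>; hence a coefficient vector that depends only
  on the level keeps this property under the reflections, and the two half steps from
  \<open>r\<^sub>2\<^sub>t\<close> to \<open>r\<^sub>2\<^sub>t\<^sub>+\<^sub>2\<close> act on the level profile exactly as the odd and even updates
  of \<open>u\<^sub>t\<close>. For the identities, weight level \<open>s\<close> by its number of vertices. These weights form an
  eigenvector, for the eigenvalue 3, of the transposed neighbour operator, so the weighted sums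
  \<open>O\<^sub>t\<close> and \<open>E\<^sub>t\<close> of \<open>u\<^sub>t\<close> over odd and even levels obey
  \<open>O\<^sub>t\<^sub>+\<^sub>1 = 3 E\<^sub>t - O\<^sub>t\<close> and \<open>E\<^sub>t\<^sub>+\<^sub>1 = 3 O\<^sub>t\<^sub>+\<^sub>1 - E\<^sub>t\<close>, which is the recursion
  \<open>f\<^sub>n\<^sub>+\<^sub>4 = 3 f\<^sub>n\<^sub>+\<^sub>2 - f\<^sub>n\<close> started at \<open>f\<^sub>-\<^sub>1 = f\<^sub>1 = 1\<close>.\<close>

section \<open>Weighted level sums of the sequences \<open>u\<^sub>t\<close>\<close>

declare fibz.simps[simp del]

lemma fibz_add2: "fibz (n + 2) = fibz (n + 1) + fibz n"
proof (cases "n < 0")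
  case True
  then show ?thesis using fibz.simps[of n] by simp
next
  case False
  then show ?thesis using fibz.simps[of "n + 2"] by (simp add: add.commute)
qed

lemma fibz_add4: "fibz (n + 4) = 3 * fibz (n + 2) - fibz n"
  using fibz_add2[of n] fibz_add2[of "n + 1"] fibz_add2[of "n + 2"] by (simp add: algebra_simps)

lemma Sum_any_shift: "Sum_any (\<lambda>s::int. g (s + k)) = Sum_any g"
  by (rule Sum_any.reindex_cong[symmetric, of "\<lambda>s. s + k"])
     (auto simp: bij_def inj_def surj_def intro: exI[of _ "_ - k"])

lemma Sum_any_minus: "Sum_any (\<lambda>s::int. g (- s)) = Sum_any g"
  by (rule Sum_any.reindex_cong[symmetric, of uminus])
     (auto simp: bij_def inj_def surj_def intro: exI[of _ "- _"])

lemma finite_support_shift: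
  fixes u :: "int \<Rightarrow> 'a::zero"
  assumes "finite {s. u s \<noteq> 0}"
  shows "finite {s. u (s + k) \<noteq> 0}"
  using finite_vimageI[OF assms, of "\<lambda>s. s + k"] by (simp add: vimage_def inj_def)

lemma finite_support_mult:
  fixes u :: "int \<Rightarrow> 'a::mult_zero"
  assumes "finite {s. u s \<noteq> 0}"
  shows "finite {s. a s * u s \<noteq> 0}"
  by (rule finite_subset[OF _ assms]) auto

lemma Sum_any_int_split:
  fixes g :: "int \<Rightarrow> 'a::comm_monoid_add"
  assumes "finite {s. g s \<noteq> 0}"
  shows "Sum_any g = Sum_any (\<lambda>s. if s \<ge> 0 then g s else 0) + Sum_any (\<lambda>s. if s > 0 then g (- s) else 0)"
proof -
  have "Sum_any (\<lambda>s. if s > 0 then g (- s) else 0) = Sum_any (\<lambda>s. if s < 0 then g s else 0)"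
    using Sum_any_minus[of "\<lambda>s. if s < 0 then g s else 0"] by simp
  moreover have "Sum_any g = Sum_any (\<lambda>s. (if s \<ge> 0 then g s else 0) + (if s < 0 then g s else 0))"
    by (rule Sum_any.cong) simp
  moreover have "\<dots> = Sum_any (\<lambda>s. if s \<ge> 0 then g s else 0) + Sum_any (\<lambda>s. if s < 0 then g s else 0)"
    by (rule Sum_any.distrib; rule finite_subset[OF _ assms]; auto)
  ultimately show ?thesis by simp
qed

text \<open>The vertices of level \<open>s\<close> (see \<open>level\<close> below) have one neighbour on level \<open>s - 1\<close>
  and two on level \<open>s + 1\<close> if \<open>s \<ge> 0\<close>, and the other way round if \<open>s < 0\<close>.\<close>

definition level_nbsum :: "(int \<Rightarrow> int) \<Rightarrow> int \<Rightarrow> int" where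
  "level_nbsum f s = (if s < 0 then 2 * f (s - 1) + f (s + 1) else f (s - 1) + 2 * f (s + 1))"

text \<open>The number of vertices on level \<open>s\<close>.\<close>

definition level_weight :: "int \<Rightarrow> int" where
  "level_weight s = (if s \<ge> 0 then 2 ^ nat s else 2 ^ nat (- s - 1))"

lemma finite_support_level_nbsum:
  assumes "finite {s. f s \<noteq> 0}"
  shows "finite {s. level_nbsum f s \<noteq> 0}"
proof (rule finite_subset)
  show "{s. level_nbsum f s \<noteq> 0} \<subseteq> {s. f (s + - 1) \<noteq> 0} \<union> {s. f (s + 1) \<noteq> 0}"
    by (auto simp: level_nbsum_def)
qed (use finite_support_shift[OF assms] in blast)

lemma Sum_any_mult_level_nbsum:
  fixes a w :: "int \<Rightarrow> int"
  assumes "finite {s. w s \<noteq> 0}"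
  shows "Sum_any (\<lambda>s. a s * level_nbsum w s)
       = Sum_any (\<lambda>s. (a (s + 1) * (if s + 1 < 0 then 2 else 1)
                       + a (s - 1) * (if s - 1 < 0 then 1 else 2)) * w s)"
proof -
  define l where "l s = a s * (if s < 0 then 2 else 1)" for s
  define r where "r s = a s * (if s < 0 then 1 else 2)" for s
  have fin: "finite {s. c s * w (s + k) \<noteq> 0}" for c :: "int \<Rightarrow> int" and k
    by (rule finite_support_mult[OF finite_support_shift[OF assms]])
  have "Sum_any (\<lambda>s. a s * level_nbsum w s) = Sum_any (\<lambda>s. l s * w (s + - 1) + r s * w (s + 1))"
    by (intro Sum_any.cong) (simp add: level_nbsum_def l_def r_def algebra_simps)
  also have "\<dots> = Sum_any (\<lambda>s. l s * w (s + - 1)) + Sum_any (\<lambda>s. r s * w (s + 1))"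
    using fin fin by (rule Sum_any.distrib)
  also have "Sum_any (\<lambda>s. l s * w (s + - 1)) = Sum_any (\<lambda>s. l (s + 1) * w (s + 0))"
    using Sum_any_shift[of "\<lambda>s. l s * w (s + - 1)" 1] by simp
  also have "Sum_any (\<lambda>s. r s * w (s + 1)) = Sum_any (\<lambda>s. r (s - 1) * w (s + 0))"
    using Sum_any_shift[of "\<lambda>s. r s * w (s + 1)" "- 1"] by simp
  also have "Sum_any (\<lambda>s. l (s + 1) * w (s + 0)) + Sum_any (\<lambda>s. r (s - 1) * w (s + 0))
           = Sum_any (\<lambda>s. l (s + 1) * w (s + 0) + r (s - 1) * w (s + 0))"
    using fin fin by (rule Sum_any.distrib[symmetric])
  finally show ?thesis
    by (simp add: l_def r_def algebra_simps)
qed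

lemma level_weight_eigen:
  "level_weight (s + 1) * (if s + 1 < 0 then 2 else 1)
   + level_weight (s - 1) * (if s - 1 < 0 then 1 else 2) = 3 * level_weight s"
proof -
  consider "s \<ge> 1" | "s = 0" | "s = -1" | "s \<le> -2" by linarith
  then show ?thesis
  proof cases
    case 1
    then have "nat (s + 1) = Suc (nat s)" "nat s = Suc (nat (s - 1))" by simp_all
    with 1 show ?thesis by (simp add: level_weight_def)
  next
    case 4
    then have "nat (- (s - 1) - 1) = Suc (nat (- s - 1))" "nat (- s - 1) = Suc (nat (- (s + 1) - 1))"
      by simp_all
    with 4 show ?thesis by (simp add: level_weight_def)
  qed (simp_all add: level_weight_def)
qed

lemma u_odd_eq: "u_odd u s = level_nbsum u s - u s"
  by (simp add: u_odd_def level_nbsum_def)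

lemma u_step_odd: "odd s \<Longrightarrow> u_step u s = level_nbsum u s - u s"
  by (simp add: u_step_def u_odd_eq)

lemma u_step_even: "even s \<Longrightarrow> u_step u s = level_nbsum (u_odd u) s - u s"
  by (simp add: u_step_def level_nbsum_def)

lemma finite_support_u_odd:
  assumes "finite {s. u s \<noteq> 0}"
  shows "finite {s. u_odd u s \<noteq> 0}"
  by (rule finite_subset[of _ "{s. level_nbsum u s \<noteq> 0} \<union> {s. u s \<noteq> 0}"])
     (auto simp: u_odd_eq finite_support_level_nbsum[OF assms] assms)

lemma finite_support_u_step:
  assumes "finite {s. u s \<noteq> 0}"
  shows "finite {s. u_step u s \<noteq> 0}"
proof (rule finite_subset)
  show "{s. u_step u s \<noteq> 0}
      \<subseteq> {s. level_nbsum u s \<noteq> 0} \<union> {s. level_nbsum (u_odd u) s \<noteq> 0} \<union> {s. u s \<noteq> 0}"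
  proof
    fix s assume "s \<in> {s. u_step u s \<noteq> 0}"
    then show "s \<in> {s. level_nbsum u s \<noteq> 0} \<union> {s. level_nbsum (u_odd u) s \<noteq> 0} \<union> {s. u s \<noteq> 0}"
      by (cases "odd s") (auto simp: u_step_odd u_step_even)
  qed
qed (simp add: assms finite_support_level_nbsum finite_support_u_odd)

lemma finite_support_useq: "finite {s. useq t s \<noteq> 0}"
  by (induction t) (simp_all add: finite_support_u_step)

definition parity_sum :: "bool \<Rightarrow> (int \<Rightarrow> int) \<Rightarrow> int" where
  "parity_sum b u = Sum_any (\<lambda>s. if odd s = b then level_weight s * u s else 0)"

lemma parity_sum_level_nbsum:
  assumes "finite {s. w s \<noteq> 0}"
  shows "Sum_any (\<lambda>s. if odd s = b then level_weight s * level_nbsum w s else 0)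
       = 3 * parity_sum (\<not> b) w"
proof -
  define a where "a s = (if odd s = b then level_weight s else 0)" for s
  have "Sum_any (\<lambda>s. if odd s = b then level_weight s * level_nbsum w s else 0)
      = Sum_any (\<lambda>s. a s * level_nbsum w s)"
    by (rule Sum_any.cong) (simp add: a_def)
  also have "\<dots> = Sum_any (\<lambda>s. 3 * (if odd s = (\<not> b) then level_weight s * w s else 0))"
    unfolding Sum_any_mult_level_nbsum[OF assms]
  proof (rule Sum_any.cong)
    fix s :: int
    have "odd (s + 1) = (\<not> odd s)" "odd (s - 1) = (\<not> odd s)" by simp_all
    then have "a (s + 1) * (if s + 1 < 0 then 2 else 1) + a (s - 1) * (if s - 1 < 0 then 1 else 2)
             = (if odd s = (\<not> b) then 3 * level_weight s else 0)"
      using level_weight_eigen[of s] by (auto simp: a_def)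
    then show "(a (s + 1) * (if s + 1 < 0 then 2 else 1) + a (s - 1) * (if s - 1 < 0 then 1 else 2)) * w s
             = 3 * (if odd s = (\<not> b) then level_weight s * w s else 0)"
      by simp
  qed
  also have "\<dots> = 3 * parity_sum (\<not> b) w"
    unfolding parity_sum_def
    by (rule Sum_any_right_distrib[symmetric], rule finite_subset[OF _ assms]) auto
  finally show ?thesis .
qed

lemma parity_sum_step:
  assumes u: "finite {s. u s \<noteq> 0}" and v: "finite {s. v s \<noteq> 0}" and w: "finite {s. w s \<noteq> 0}"
    and v_eq: "\<And>s. odd s = b \<Longrightarrow> v s = level_nbsum w s - u s"
  shows "parity_sum b v = 3 * parity_sum (\<not> b) w - parity_sum b u"
proof -
  have "parity_sum b v + parity_sum b u
      = Sum_any (\<lambda>s. (if odd s = b then level_weight s * v s else 0)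
                   + (if odd s = b then level_weight s * u s else 0))"
    unfolding parity_sum_def
    by (rule Sum_any.distrib[symmetric]; rule finite_subset[OF _ v] finite_subset[OF _ u]; auto)
  also have "\<dots> = Sum_any (\<lambda>s. if odd s = b then level_weight s * level_nbsum w s else 0)"
    by (rule Sum_any.cong) (simp add: v_eq algebra_simps)
  also have "\<dots> = 3 * parity_sum (\<not> b) w"
    by (rule parity_sum_level_nbsum[OF w])
  finally show ?thesis by simp
qed

lemma parity_sum_useq:
  "parity_sum True (useq t) = fibz (4 * int t - 1) \<and> parity_sum False (useq t) = fibz (4 * int t + 1)"
proof (induction t)
  case 0
  have "parity_sum True (useq 0) = Sum_any (\<lambda>s::int. if s = -1 then 1 else 0)"
    unfolding parity_sum_def by (rule Sum_any.cong) (auto simp: level_weight_def)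
  moreover have "parity_sum False (useq 0) = Sum_any (\<lambda>s::int. if s = 0 then 1 else 0)"
    unfolding parity_sum_def by (rule Sum_any.cong) (auto simp: level_weight_def)
  moreover have "fibz (-1) = 1" "fibz 1 = 1"
    using fibz.simps[of "-1"] fibz.simps[of 1] fibz.simps[of 0] by simp_all
  ultimately show ?case by simp
next
  case (Suc t)
  let ?u = "useq t"
  have fin: "finite {s. ?u s \<noteq> 0}" "finite {s. u_step ?u s \<noteq> 0}" "finite {s. u_odd ?u s \<noteq> 0}"
    by (simp_all add: finite_support_useq finite_support_u_step finite_support_u_odd)
  have odd_part: "parity_sum True (u_step ?u) = 3 * parity_sum False ?u - parity_sum True ?u"
    using parity_sum_step[of ?u "u_step ?u" ?u True] fin u_step_odd by simp
  have "parity_sum True (u_odd ?u) = parity_sum True (u_step ?u)"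
    unfolding parity_sum_def by (rule Sum_any.cong) (simp add: u_step_def)
  then have even_part: "parity_sum False (u_step ?u) = 3 * parity_sum True (u_step ?u) - parity_sum False ?u"
    using parity_sum_step[of ?u "u_step ?u" "u_odd ?u" False] fin u_step_even by simp
  show ?case
    using Suc.IH odd_part even_part fibz_add4[of "4 * int t - 1"] fibz_add4[of "4 * int t + 1"]
    by (simp add: algebra_simps)
qed

lemma parity_sum_odd_expand:
  assumes "finite {s. u s \<noteq> 0}"
  shows "parity_sum True u =
           Sum_any (\<lambda>s::int. if s \<ge> 1 \<and> odd s then 2 ^ nat s * u s else 0)
         + Sum_any (\<lambda>s::int. if s \<ge> 1 \<and> odd s then 2 ^ (nat s - 1) * u (- s) else 0)"
proof -
  have pos: "odd s \<Longrightarrow> 0 \<le> s \<Longrightarrow> 1 \<le> s" for s :: int by presburger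
  show ?thesis
    unfolding parity_sum_def
    by (subst Sum_any_int_split, rule finite_subset[OF _ assms])
       (auto intro!: arg_cong2[of _ _ _ _ "(+)"] Sum_any.cong simp: pos level_weight_def nat_diff_distrib)
qed

lemma parity_sum_even_expand:
  assumes "finite {s. u s \<noteq> 0}"
  shows "parity_sum False u =
           Sum_any (\<lambda>s::int. if s \<ge> 0 \<and> even s then 2 ^ nat s * u s else 0)
         + Sum_any (\<lambda>s::int. if s \<ge> 2 \<and> even s then 2 ^ (nat s - 1) * u (- s) else 0)"
proof -
  have pos: "even s \<Longrightarrow> 0 < s \<Longrightarrow> 2 \<le> s" for s :: int by presburger
  show ?thesis
    unfolding parity_sum_def
    by (subst Sum_any_int_split, rule finite_subset[OF _ assms])
       (auto intro!: arg_cong2[of _ _ _ _ "(+)"] Sum_any.cong simp: pos level_weight_def nat_diff_distrib)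
qed

section \<open>Distances in the tree\<close>

lemma longest_common_prefix_self: "longest_common_prefix xs xs = xs"
  by (induction xs) auto

lemma longest_common_prefix_commute: "longest_common_prefix xs ys = longest_common_prefix ys xs"
  by (induction xs ys rule: longest_common_prefix.induct) auto

lemma longest_common_prefix_snoc:
  "longest_common_prefix xs (ys @ [y])
   = (if prefix (ys @ [y]) xs then ys @ [y] else longest_common_prefix xs ys)"
proof (induction ys arbitrary: xs)
  case Nil
  then show ?case by (cases xs) auto
next
  case (Cons a ys)
  then show ?case by (cases xs) auto
qed

lemma longest_common_prefix_eq_right: "prefix ys xs \<Longrightarrow> longest_common_prefix xs ys = ys"
  by (meson longest_common_prefix_max_prefix longest_common_prefix_prefix2 prefix_order.antisym
      prefix_order.refl)

lemma prefix_length_eq: "prefix xs ys \<Longrightarrow> length ys \<le> length xs \<Longrightarrow> xs = ys"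
  by (metis prefix_length_le prefix_length_prefix prefix_order.antisym prefix_order.refl)

lemma reduced_word_iff: "reduced_word w \<longleftrightarrow> (\<forall>a\<in>set w. a < 3) \<and> successively (\<noteq>) w"
  by (simp add: reduced_word_def successively_conv_nth)

lemma reduced_word_Cons:
  "reduced_word (a # R) \<longleftrightarrow> a < 3 \<and> (R = [] \<or> a \<noteq> hd R) \<and> reduced_word R"
  by (auto simp: reduced_word_iff successively_Cons)

lemma reduced_word_drop: "reduced_word R \<Longrightarrow> reduced_word (drop k R)"
  unfolding reduced_word_def by (auto dest: in_set_dropD)

definition word :: "tree3 \<Rightarrow> nat list" where
  "word z = rev (Rep_tree3 z)"

lemma word_inject: "word a = word b \<longleftrightarrow> a = b"
  by (simp add: word_def Rep_tree3_inject)

lemma adj_iff_word: "adj w z \<longleftrightarrow> (\<exists>b. word w = word z @ [b]) \<or> (\<exists>b. word z = word w @ [b])"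
  unfolding adj_def word_def by (metis rev.simps(2) rev_rev_ident)

lemma adj_sym: "adj w z \<Longrightarrow> adj z w"
  unfolding adj_def by blast

lemma adj_irrefl: "\<not> adj z z"
  unfolding adj_def by (metis impossible_Cons le_refl)

text \<open>The geodesic from \<open>a\<close> to \<open>z\<close> turns at the vertex whose word is the longest common
  prefix of \<open>word a\<close> and \<open>word z\<close>.\<close>

definition word_dist :: "tree3 \<Rightarrow> tree3 \<Rightarrow> nat" where
  "word_dist a z = length (word a) + length (word z)
                   - 2 * length (longest_common_prefix (word a) (word z))"

lemma word_dist_commute: "word_dist a z = word_dist z a"
  by (simp add: word_dist_def longest_common_prefix_commute)

lemma word_dist_self: "word_dist a a = 0"
  by (simp add: word_dist_def longest_common_prefix_self)

lemma word_dist_eq_0_iff: "word_dist a z = 0 \<longleftrightarrow> a = z"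
proof
  assume "word_dist a z = 0"
  moreover define L where "L = longest_common_prefix (word a) (word z)"
  moreover have "prefix L (word a)" "prefix L (word z)"
    unfolding L_def by (rule longest_common_prefix_prefix1 longest_common_prefix_prefix2)+
  ultimately have "L = word a" "L = word z"
    using prefix_length_le prefix_length_eq by (fastforce simp: word_dist_def)+
  then show "a = z" by (simp add: word_inject)
qed (simp add: word_dist_self)

lemma word_dist_snoc:
  assumes "word w = word z @ [b]"
  shows "if prefix (word w) (word a) then word_dist a z = word_dist a w + 1
         else word_dist a w = word_dist a z + 1"
proof (cases "prefix (word w) (word a)")
  case True
  then have "prefix (word z) (word a)" using assms by (metis append_prefixD)
  with True show ?thesis
    using assms prefix_length_le[OF True]
    by (simp add: word_dist_def longest_common_prefix_snoc longest_common_prefix_eq_right)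
next
  case False
  then show ?thesis
    using assms prefix_length_le[OF longest_common_prefix_prefix1, of "word a" "word z"]
      prefix_length_le[OF longest_common_prefix_prefix2, of "word a" "word z"]
    by (simp add: word_dist_def longest_common_prefix_snoc)
qed

lemma word_dist_adj:
  "adj w z \<Longrightarrow> word_dist a w = word_dist a z + 1 \<or> word_dist a z = word_dist a w + 1"
  unfolding adj_iff_word by (metis word_dist_snoc)

lemma exists_adj_closer_word:
  assumes "z \<noteq> a"
  shows "\<exists>w. adj w z \<and> word_dist a w + 1 = word_dist a z"
proof (cases "prefix (word z) (word a)")
  case False
  then obtain c R where R: "Rep_tree3 z = c # R"
    by (cases "Rep_tree3 z") (auto simp: word_def)
  then have "reduced_word R" using Rep_tree3[of z] by (simp add: reduced_word_Cons)
  then have "Rep_tree3 (Abs_tree3 R) = R" by (simp add: Abs_tree3_inverse)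
  then have "word z = word (Abs_tree3 R) @ [c]" "adj (Abs_tree3 R) z"
    using R by (auto simp: word_def adj_def)
  with False show ?thesis by (metis word_dist_snoc)
next
  case True
  define n where "n = Suc (length (word z))"
  have "length (word z) < length (word a)"
    using True assms prefix_length_eq[OF True] by (metis not_le word_inject)
  then have take: "take n (word a) = word z @ [word a ! length (word z)]"
    using True by (metis n_def prefix_def take_Suc_conv_app_nth take_all_iff append_eq_conv_conj
        order.refl)
  have "rev (take n (word a)) = drop (length (word a) - n) (Rep_tree3 a)"
    by (simp add: word_def rev_take)
  then have "reduced_word (rev (take n (word a)))"
    using Rep_tree3[of a] reduced_word_drop by simp
  then have "word (Abs_tree3 (rev (take n (word a)))) = take n (word a)"
    by (simp add: word_def Abs_tree3_inverse)
  then show ?thesis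
    using word_dist_snoc[of _ z _ a] take take_is_prefix adj_iff_word by metis
qed

lemma adj_closer_word:
  assumes "adj w z" "word_dist a w < word_dist a z"
  shows "word w = (if prefix (word z) (word a) then take (Suc (length (word z))) (word a)
                   else butlast (word z))"
  using assms(1) unfolding adj_iff_word
proof (elim disjE exE)
  fix b assume wz: "word w = word z @ [b]"
  with assms(2) have "prefix (word w) (word a)"
    using word_dist_snoc[OF wz, of a] by (auto split: if_splits)
  then show ?thesis using wz by (auto simp: prefix_def)
next
  fix c assume zw: "word z = word w @ [c]"
  with assms(2) have "\<not> prefix (word z) (word a)"
    using word_dist_snoc[OF zw, of a] by (auto split: if_splits)
  then show ?thesis using zw by simp
qed

lemma walk_Cons_iff: "walk (u # p) \<longleftrightarrow> p = [] \<or> adj u (hd p) \<and> walk p"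
  unfolding walk_def by (cases p) (auto simp: nth_Cons split: nat.splits)

lemma walk_drop: "walk p \<Longrightarrow> i < length p \<Longrightarrow> walk (drop i p)"
  unfolding walk_def by auto

lemma word_dist_walk_le: "walk p \<Longrightarrow> word_dist (hd p) (last p) \<le> length p - 1"
proof (induction p)
  case (Cons u p)
  show ?case
  proof (cases "p = []")
    case False
    with Cons.prems have adj: "adj u (hd p)" and "walk p" by (simp_all add: walk_Cons_iff)
    with Cons.IH have "word_dist (hd p) (last p) \<le> length p - 1" by simp
    moreover have "word_dist (last p) u \<le> word_dist (last p) (hd p) + 1"
      using word_dist_adj[OF adj, of "last p"] by linarith
    moreover have "0 < length p" using False by simp
    ultimately show ?thesis
      using False word_dist_commute[of "last p"] by (simp; linarith)
  qed (simp add: word_dist_self)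
qed (simp add: walk_def)

lemma exists_walk: "\<exists>p. walk p \<and> hd p = u \<and> last p = v \<and> length p = Suc (word_dist u v)"
proof (induction "word_dist u v" arbitrary: u)
  case 0
  then show ?case by (intro exI[of _ "[u]"]) (simp add: walk_def word_dist_eq_0_iff)
next
  case (Suc n)
  then have "u \<noteq> v" by (auto simp: word_dist_self)
  then obtain w where w: "adj w u" "word_dist v w + 1 = word_dist v u"
    using exists_adj_closer_word by blast
  then have "word_dist w v = n" using Suc.hyps(2) word_dist_commute[of v] by simp
  then obtain p where "walk p" "hd p = w" "last p = v" "length p = Suc n"
    using Suc.hyps(1) by blast
  moreover from this have "p \<noteq> []" by auto
  ultimately show ?case using w
    by (intro exI[of _ "u # p"]) (auto simp: walk_Cons_iff adj_sym Suc.hyps(2))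
qed

lemma dist_eq_word_dist: "dist u v = word_dist u v"
  unfolding dist_def
proof (rule Least_equality)
  fix n assume "\<exists>p. walk p \<and> hd p = u \<and> last p = v \<and> length p = Suc n"
  then show "word_dist u v \<le> n" using word_dist_walk_le by fastforce
qed (rule exists_walk)

lemma dist_commute: "dist a z = dist z a"
  by (simp add: dist_eq_word_dist word_dist_commute)

lemma dist_eq_0_iff: "dist a z = 0 \<longleftrightarrow> a = z"
  by (simp add: dist_eq_word_dist word_dist_eq_0_iff)

lemma dist_self [simp]: "dist a a = 0"
  by (simp add: dist_eq_0_iff)

lemma dist_adj_cases: "adj w z \<Longrightarrow> dist a w = dist a z + 1 \<or> dist a z = dist a w + 1"
  using word_dist_adj by (simp add: dist_eq_word_dist)

lemma dist_adj: "adj a b \<Longrightarrow> dist a b = 1"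
  using dist_adj_cases[of a b a] by simp

lemma exists_adj_closer: "z \<noteq> a \<Longrightarrow> \<exists>w. adj w z \<and> dist a w + 1 = dist a z"
  using exists_adj_closer_word by (simp add: dist_eq_word_dist)

lemma adj_closer_unique:
  "adj w z \<Longrightarrow> adj w' z \<Longrightarrow> dist a w < dist a z \<Longrightarrow> dist a w' < dist a z \<Longrightarrow> w = w'"
  by (metis adj_closer_word dist_eq_word_dist word_inject)

lemma exists_geodesic_through_iff:
  assumes "adj x y"
  shows "(\<exists>p. geodesic p x z \<and> y \<in> set p) \<longleftrightarrow> dist y z < dist x z"
proof
  assume "\<exists>p. geodesic p x z \<and> y \<in> set p"
  then obtain p i where p: "walk p" "hd p = x" "last p = z" "length p = Suc (dist x z)"
    and i: "i < length p" "p ! i = y"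
    by (auto simp: geodesic_def in_set_conv_nth)
  have "i \<noteq> 0" using i p(2) assms adj_irrefl by (metis hd_conv_nth list.size(3) not_less0)
  have "dist y z \<le> length (drop i p) - 1"
    using word_dist_walk_le[OF walk_drop[OF p(1) i(1)]] i p(3)
    by (simp add: hd_drop_conv_nth dist_eq_word_dist)
  with p(4) i(1) \<open>i \<noteq> 0\<close> show "dist y z < dist x z" by simp
next
  assume "dist y z < dist x z"
  then have "dist x z = dist y z + 1" using dist_adj_cases[OF assms, of z] dist_commute by fastforce
  moreover obtain q where "walk q" "hd q = y" "last q = z" "length q = Suc (dist y z)"
    using exists_walk dist_eq_word_dist by metis
  ultimately have "geodesic (x # q) x z \<and> y \<in> set (x # q)"
    using assms by (auto simp: geodesic_def walk_Cons_iff)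
  then show "\<exists>p. geodesic p x z \<and> y \<in> set p" by blast
qed

lemma card_neighbour_words:
  assumes "reduced_word R"
  shows "card {V. reduced_word V \<and> ((\<exists>a. R = a # V) \<or> (\<exists>a. V = a # R))} = 3"
proof -
  have letters: "a < 3 \<longleftrightarrow> a \<in> {0, 1, 2}" for a :: nat by auto
  have "reduced_word []" by (simp add: reduced_word_def)
  show ?thesis
  proof (cases R)
    case Nil
    then have "{V. reduced_word V \<and> ((\<exists>a. R = a # V) \<or> (\<exists>a. V = a # R))} = (\<lambda>a. [a]) ` {0, 1, 2}"
      using \<open>reduced_word []\<close> by (auto simp: reduced_word_Cons letters)
    then show ?thesis by simp
  next
    case (Cons c R')
    then have "{V. reduced_word V \<and> ((\<exists>a. R = a # V) \<or> (\<exists>a. V = a # R))}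
             = insert R' ((\<lambda>a. a # R) ` ({0, 1, 2} - {c}))"
      using assms by (auto simp: reduced_word_Cons letters)
    moreover have "R' \<notin> (\<lambda>a. a # R) ` ({0, 1, 2} - {c})" using Cons by auto
    moreover have "c \<in> {0, 1, 2}" using assms Cons by (simp add: reduced_word_Cons letters)
    then have "card ({0, 1, 2} - {c}) = 2" by (subst card_Diff_singleton) simp_all
    then have "card ((\<lambda>a. a # R) ` ({0, 1, 2} - {c})) = 2" by (simp add: card_image inj_on_def)
    ultimately show ?thesis by simp
  qed
qed

lemma card_neighbours: "card {w. adj w z} = 3"
proof -
  let ?N = "{V. reduced_word V \<and> ((\<exists>a. Rep_tree3 z = a # V) \<or> (\<exists>a. V = a # Rep_tree3 z))}"
  have "Rep_tree3 ` {w. adj w z} = ?N"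
  proof (intro set_eqI iffI)
    fix V assume "V \<in> Rep_tree3 ` {w. adj w z}"
    then show "V \<in> ?N" using Rep_tree3 by (auto simp: adj_def)
  next
    fix V assume V: "V \<in> ?N"
    then have "Rep_tree3 (Abs_tree3 V) = V" by (simp add: Abs_tree3_inverse)
    moreover from V this have "adj (Abs_tree3 V) z" by (auto simp: adj_def)
    ultimately show "V \<in> Rep_tree3 ` {w. adj w z}" by (intro image_eqI[of V _ "Abs_tree3 V"]) simp_all
  qed
  have "inj_on Rep_tree3 {w. adj w z}" by (meson Rep_tree3_inject inj_onI)
  then have "card {w. adj w z} = card (Rep_tree3 ` {w. adj w z})" by (simp add: card_image)
  also have "\<dots> = 3"
    unfolding \<open>Rep_tree3 ` {w. adj w z} = ?N\<close> using Rep_tree3[of z] by (simp add: card_neighbour_words)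
  finally show ?thesis .
qed

section \<open>Levels relative to an edge\<close>

lemma adj_dist_cases: "adj a b \<Longrightarrow> dist a z = dist b z + 1 \<or> dist b z = dist a z + 1"
  using dist_adj_cases[of a b z] dist_commute[of z] by simp

lemma sum_card_3:
  fixes g :: "'a \<Rightarrow> 'b::comm_semiring_1"
  assumes "card S = 3" "p \<in> S" "\<And>w. w \<in> S \<Longrightarrow> w \<noteq> p \<Longrightarrow> g w = c"
  shows "sum g S = g p + 2 * c"
proof -
  have "finite S" using assms(1) by (simp add: card_ge_0_finite)
  then have "sum g S = g p + sum g (S - {p})" using assms(2) by (simp add: sum.remove)
  also have "sum g (S - {p}) = sum (\<lambda>_. c) (S - {p})" using assms(3) by (intro sum.cong) auto
  finally show ?thesis using assms(1,2) \<open>finite S\<close> by simp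
qed

definition level :: "tree3 \<Rightarrow> tree3 \<Rightarrow> tree3 \<Rightarrow> int" where
  "level x y z = (if dist y z < dist x z then - int (dist x z) else int (dist x z))"

lemma level_Ts: "adj x y \<Longrightarrow> z \<in> Ts x y n \<Longrightarrow> level x y z = int n"
  by (simp add: Ts_def level_def exists_geodesic_through_iff)

lemma level_Ts': "adj x y \<Longrightarrow> z \<in> Ts' x y n \<Longrightarrow> level x y z = - int n"
  by (simp add: Ts'_def level_def exists_geodesic_through_iff)

lemma odd_level_iff: "odd (level x y z) \<longleftrightarrow> odd (dist x z)"
  by (simp add: level_def)

lemma level_eq_0_iff: "level x y z = 0 \<longleftrightarrow> z = x"
  by (simp add: level_def dist_eq_0_iff dist_commute[of x])

lemma level_eq_minus_1_iff: "adj x y \<Longrightarrow> level x y z = -1 \<longleftrightarrow> z = y"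
  using adj_dist_cases[of x y z] dist_eq_0_iff[of y z] dist_adj[of x y]
  by (auto simp: level_def)

text \<open>On the \<open>y\<close>-side, the unique neighbour of \<open>w\<close> closer to \<open>y\<close> is also closer to \<open>x\<close>,
  so it is the \<open>z\<close> of the hypotheses.\<close>

lemma dist_less_closer_neighbour:
  assumes xy: "adj x y" and w: "dist y w < dist x w" "w \<noteq> y" and z: "adj z w" "dist x z < dist x w"
  shows "dist y z < dist x z"
proof -
  obtain q where q: "adj q w" "dist y q + 1 = dist y w"
    using exists_adj_closer[OF w(2)] by blast
  have "dist x q < dist x w"
    using adj_dist_cases[OF xy, of q] adj_dist_cases[OF xy, of w] q(2) w(1) by linarith
  then have "q = z" using adj_closer_unique[OF q(1) z(1) _ z(2)] by simp
  then show ?thesis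
    using adj_dist_cases[OF xy, of w] dist_adj_cases[OF z(1), of x] q(2) w(1) z(2) by simp
qed

lemma level_closer_neighbour:
  assumes xy: "adj x y" and p: "adj p z" "dist x p < dist x z"
  shows "level x y p = (if level x y z < 0 then level x y z + 1 else level x y z - 1)"
proof -
  have xz: "dist x z = dist x p + 1" using dist_adj_cases[OF p(1), of x] p(2) by linarith
  show ?thesis
  proof (cases "dist y z < dist x z")
    case False
    then have "\<not> dist y p < dist x p"
      using adj_dist_cases[OF xy, of z] dist_adj_cases[OF p(1), of y] xz by linarith
    with False show ?thesis using xz by (simp add: level_def)
  next
    case True
    show ?thesis
    proof (cases "z = y")
      case True
      then have "p = x" using xz dist_adj[OF xy] dist_eq_0_iff by simp
      with True show ?thesis using dist_adj[OF xy] by (simp add: level_def)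
    next
      case False
      then have "dist y p < dist x p"
        using dist_less_closer_neighbour[OF xy \<open>dist y z < dist x z\<close> False p] by simp
      with True show ?thesis using xz by (simp add: level_def)
    qed
  qed
qed

lemma level_farther_neighbour:
  assumes xy: "adj x y" and w: "adj w z" "dist x z < dist x w" "w \<noteq> y"
  shows "level x y w = (if level x y z < 0 then level x y z - 1 else level x y z + 1)"
proof -
  have xw: "dist x w = dist x z + 1" using dist_adj_cases[OF w(1), of x] w(2) by linarith
  show ?thesis
  proof (cases "dist y z < dist x z")
    case True
    then have "dist y w < dist x w" using dist_adj_cases[OF w(1), of y] xw by linarith
    with True show ?thesis using xw by (simp add: level_def)
  next
    case False
    then have "\<not> dist y w < dist x w"
      using dist_less_closer_neighbour[OF xy _ w(3) adj_sym[OF w(1)] w(2)] by blast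
    with False show ?thesis using xw by (simp add: level_def)
  qed
qed

lemma sum_neighbours_level:
  assumes xy: "adj x y"
  shows "(\<Sum>w\<in>{w. adj w z}. f (level x y w)) = level_nbsum f (level x y z)"
proof -
  obtain p where p: "adj p z"
    and level_p: "level x y p = (if level x y z < 0 then level x y z + 1 else level x y z - 1)"
    and others: "\<And>w. adj w z \<Longrightarrow> w \<noteq> p \<Longrightarrow> dist x z < dist x w \<and> w \<noteq> y"
  proof (cases "z = x")
    case True
    have "dist x w = 1" if "adj w x" for w using dist_adj[OF adj_sym[OF that]] .
    then show ?thesis
      using that[of y] True adj_sym[OF xy] level_eq_0_iff[of x y x] level_eq_minus_1_iff[OF xy, of y]
      by (simp add: dist_eq_0_iff)
  next
    case False
    then obtain p where p: "adj p z" "dist x p + 1 = dist x z" using exists_adj_closer by blast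
    have "dist x z < dist x w \<and> w \<noteq> y" if "adj w z" "w \<noteq> p" for w
    proof -
      have "\<not> dist x w < dist x z"
      proof
        assume "dist x w < dist x z"
        then have "w = p" using adj_closer_unique[OF that(1) p(1)] p(2) by simp
        with that(2) show False ..
      qed
      then have "dist x z < dist x w" using dist_adj_cases[OF that(1), of x] by linarith
      moreover have "dist x z \<noteq> 0" using False dist_eq_0_iff by simp
      ultimately show ?thesis using dist_adj[OF xy] by auto
    qed
    then show ?thesis using that[OF p(1) level_closer_neighbour[OF xy p(1)]] p(2) by simp
  qed
  have "(\<Sum>w\<in>{w. adj w z}. f (level x y w))
      = f (level x y p) + 2 * f (if level x y z < 0 then level x y z - 1 else level x y z + 1)"
    using others level_farther_neighbour[OF xy]
    by (intro sum_card_3[OF card_neighbours]) (simp_all add: p)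
  then show ?thesis using level_p by (simp add: level_nbsum_def)
qed

lemma rr_even_eq_useq_level:
  assumes xy: "adj x y"
  shows "rr x y (2 * t) z = useq t (level x y z)"
proof (induction t arbitrary: z)
  case 0
  have "x \<noteq> y" using xy adj_irrefl by metis
  then show ?case using level_eq_0_iff[of x y z] level_eq_minus_1_iff[OF xy, of z] by (auto simp: sgen_def)
next
  case (Suc t)
  let ?u = "useq t"
  define v where "v s = (if odd s then u_odd ?u s else ?u s)" for s
  have half_step: "rr x y (Suc (2 * t)) z = v (level x y z)" for z
    using Suc.IH sum_neighbours_level[OF xy, of ?u] odd_level_iff[of x y z]
    by (simp add: Sigma_odd_def refl_def v_def u_odd_eq)
  have "level_nbsum v s = level_nbsum (u_odd ?u) s" if "even s" for s
    using that by (simp add: level_nbsum_def v_def)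
  then have "rr x y (Suc (Suc (2 * t))) z = u_step ?u (level x y z)"
    using half_step sum_neighbours_level[OF xy, of v] odd_level_iff[of x y z]
    by (simp add: Sigma_even_def refl_def v_def u_step_def level_nbsum_def)
  then show ?case by simp
qed

theorem mainTheorem2:
  fixes x y :: tree3 and t :: nat
  assumes "adj x y"
  shows "(\<forall>s::int. s \<ge> 0 \<longrightarrow> (\<forall>z \<in> Ts x y (nat s). useq t s = rr x y (2 * t) z))
       \<and> (\<forall>s::int. s \<le> -1 \<longrightarrow> (\<forall>z \<in> Ts' x y (nat (- s)). useq t s = rr x y (2 * t) z))
       \<and> fibz (4 * int t - 1) =
           Sum_any (\<lambda>s::int. if s \<ge> 1 \<and> odd s then 2 ^ nat s * useq t s else 0)
         + Sum_any (\<lambda>s::int. if s \<ge> 1 \<and> odd s then 2 ^ (nat s - 1) * useq t (- s) else 0)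
       \<and> fibz (4 * int t + 1) =
           Sum_any (\<lambda>s::int. if s \<ge> 0 \<and> even s then 2 ^ nat s * useq t s else 0)
         + Sum_any (\<lambda>s::int. if s \<ge> 2 \<and> even s then 2 ^ (nat s - 1) * useq t (- s) else 0)"
proof (intro conjI allI impI ballI)
  fix s :: int and z
  assume "s \<ge> 0" "z \<in> Ts x y (nat s)"
  then show "useq t s = rr x y (2 * t) z"
    using level_Ts[OF assms] rr_even_eq_useq_level[OF assms] by simp
next
  fix s :: int and z
  assume "s \<le> -1" "z \<in> Ts' x y (nat (- s))"
  then show "useq t s = rr x y (2 * t) z"
    using level_Ts'[OF assms] rr_even_eq_useq_level[OF assms] by simp
qed (use parity_sum_useq[of t] parity_sum_odd_expand parity_sum_even_expand finite_support_useq in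
       \<open>simp_all\<close>)

end
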